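(* Let $q$ be an odd prime power, let $n,k$ be positive integers, and let $a,b,\delta\in\mathbb{F}_{q^n}$ with $ab\neq0$. Then $$f(x)=(ax^{q^k}-bx+\delta)^{\frac{q^n+1}{2}}+ax^{q^k}+bx$$ is a permutation polynomial of $\mathbb{F}_{q^n}$ if and only if $ab\in D_0$.
   Context: Let $\alpha$ be a primitive element of $\mathbb{F}_{q^n}$; $D_0=\langle\alpha^2\rangle$ is the multiplicative subgroup generated by $\alpha^2$, i.e. the set of nonzero squares in $\mathbb{F}_{q^n}$. A permutation polynomial of $\mathbb{F}_{q^n}$ is one inducing a bijection of $\mathbb{F}_{q^n}$. *)

theory Defs
  imports "HOL-Computational_Algebra.Primes"
begin

text \<open>D0: the set of nonzero squares of a field, i.e. the subgroup generated by
  the square of a primitive element.\<close>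
definition D0 :: "'a::field set" where
  "D0 = {y. y \<noteq> 0 \<and> (\<exists>z. y = z ^ 2)}"

definition permutation_poly :: "('a \<Rightarrow> 'a) \<Rightarrow> bool" where
  "permutation_poly f = bij f"

end

theory Submission
  imports "HOL-Library.Cardinality" "HOL-Number_Theory.Residues" "HOL-Computational_Algebra.Polynomial" Defs
begin

text \<open>Write \<open>\<eta>\<close> for the quadratic character \<open>x \<mapsto> x^((Q-1)/2)\<close> of the field with \<open>Q\<close>
  elements and \<open>\<sigma> x = x^(q^k)\<close>, an additive bijection with \<open>\<eta> \<circ> \<sigma> = \<eta>\<close>. With
  \<open>U x = a \<sigma> x - b x + \<delta>\<close> one has \<open>f x = U x \<eta>(U x) + a \<sigma> x + b x\<close>, so \<open>f x = 2a \<sigma> x + \<delta>\<close>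
  where \<open>\<eta>(U x) = 1\<close> and \<open>f x = 2b x - \<delta>\<close> elsewhere; each branch is injective. If the
  two branches meet, \<open>f x = f y\<close>, then \<open>U x = b (y - x)\<close> and \<open>U y = a \<sigma>(y - x)\<close>, hence
  \<open>\<eta>(U x) \<eta>(U y) = \<eta>(a b)\<close>. So for a square \<open>a b\<close> the branches cannot meet, whereas for a
  non-square \<open>a b\<close> the point \<open>x\<close> with \<open>U x = 1\<close> (it exists since \<open>x \<mapsto> a \<sigma> x - b x\<close>
  is then injective) collides with \<open>x + 1/b\<close>.\<close>

lemma finite_field_power_card_minus_1:
  fixes x :: "'a::{finite,field}"
  assumes "x \<noteq> 0"
  shows "x ^ (CARD('a) - 1) = 1"
proof -
  have "x * (\<Prod>y\<in>UNIV-{0}. x * y) = x * x ^ (CARD('a) - 1) * \<Prod>(UNIV-{0::'a})"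
    by (simp add: prod.distrib mult_ac)
  moreover have "(\<Prod>y\<in>UNIV-{0}. x * y) = (\<Prod>y\<in>UNIV-{0::'a}. y)"
    by (rule prod.reindex_bij_witness[of _ "\<lambda>y. y / x" "\<lambda>y. x * y"]) (use assms in auto)
  moreover have "\<Prod>(UNIV-{0::'a}) \<noteq> 0"
    by simp
  ultimately show ?thesis
    using assms by (metis mult.commute mult_cancel_left mult_cancel_right1)
qed

lemma odd_card_field_ge_3:
  assumes "odd CARD('a::{finite,field})"
  shows "CARD('a) \<ge> 3"
proof -
  have "card {0::'a, 1} \<le> CARD('a)"
    by (rule card_mono) auto
  with assms show ?thesis
    by (cases "CARD('a) = 2") auto
qed

lemma prime_CHAR_finite_field: "prime CHAR('a::{finite,field})"
  by (rule prime_CHAR_semidom[OF finite_imp_CHAR_pos]) simp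

lemma odd_CHAR_if_odd_card:
  assumes "odd CARD('a::ring_1)"
  shows "odd CHAR('a)"
  using assms CHAR_dvd_CARD dvd_trans by blast

lemma two_neq_zero_if_odd_card:
  assumes "odd CARD('a::{finite,field})"
  shows "(2::'a) \<noteq> 0"
proof
  assume "(2::'a) = 0"
  then have "CHAR('a) dvd 2"
    by (metis of_nat_eq_0_iff_char_dvd of_nat_numeral)
  with odd_CHAR_if_odd_card[OF assms] have "CHAR('a) = 1"
    by (metis prime_nat_iff two_is_prime_nat)
  then show False
    by (metis of_nat_CHAR of_nat_1 zero_neq_one)
qed

lemma card_power_eq_le:
  fixes c :: "'a::idom"
  assumes "n > 0"
  shows "card {x. x ^ n = c} \<le> n"
proof -
  define p where "p = monom (1::'a) n - [:c:]"
  have poly_p: "poly p x = x ^ n - c" for x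
    unfolding p_def by (simp add: poly_monom)
  have "coeff p n = 1"
    using assms unfolding p_def by (simp add: coeff_pCons split: nat.split)
  then have "p \<noteq> 0"
    by auto
  have "degree p \<le> n"
    unfolding p_def by (intro degree_diff_le) (auto simp: degree_monom_le)
  have "{x. x ^ n = c} = {x. poly p x = 0}"
    by (simp add: poly_p)
  with card_poly_roots_bound[OF \<open>p \<noteq> 0\<close>] \<open>degree p \<le> n\<close> show ?thesis
    by simp
qed

lemma card_D0_lower_bound: "CARD('a::{finite,field}) - 1 \<le> 2 * card (D0 :: 'a set)"
proof -
  have "UNIV - {0} \<subseteq> (\<Union>s\<in>D0. {w::'a. w ^ 2 = s})"
    unfolding D0_def by auto
  then have "card (UNIV - {0::'a}) \<le> card (\<Union>s\<in>D0. {w::'a. w ^ 2 = s})"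
    by (intro card_mono) auto
  also have "\<dots> \<le> (\<Sum>s\<in>D0. card {w::'a. w ^ 2 = s})"
    by (intro card_UN_le) auto
  also have "\<dots> \<le> (\<Sum>s\<in>(D0 :: 'a set). 2)"
    by (rule sum_mono) (rule card_power_eq_le, simp)
  finally show ?thesis
    by (simp add: card_Diff_singleton mult.commute)
qed

definition quadratic_character :: "'a::{finite,field} \<Rightarrow> 'a" where
  "quadratic_character x = x ^ ((CARD('a) - 1) div 2)"

lemma quadratic_character_1: "quadratic_character 1 = 1"
  unfolding quadratic_character_def by simp

lemma quadratic_character_mult:
  "quadratic_character (x * y) = quadratic_character x * quadratic_character y"
  unfolding quadratic_character_def by (simp add: power_mult_distrib)

lemma quadratic_character_0:
  assumes "odd CARD('a::{finite,field})"
  shows "quadratic_character (0::'a) = 0"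
  using odd_card_field_ge_3[OF assms] unfolding quadratic_character_def
  by (simp add: power_0_left)

lemma quadratic_character_squared:
  fixes x :: "'a::{finite,field}"
  assumes "odd CARD('a)" and "x \<noteq> 0"
  shows "quadratic_character x ^ 2 = 1"
proof -
  have "2 * ((CARD('a) - 1) div 2) = CARD('a) - 1"
    using assms(1) odd_card_field_ge_3[OF assms(1)] by presburger
  then show ?thesis
    unfolding quadratic_character_def
    by (metis finite_field_power_card_minus_1[OF assms(2)] power_mult mult.commute)
qed

lemma quadratic_character_cases:
  fixes x :: "'a::{finite,field}"
  assumes "odd CARD('a)" and "x \<noteq> 0"
  shows "quadratic_character x = 1 \<or> quadratic_character x = -1"
  using quadratic_character_squared[OF assms] by (simp add: power2_eq_1_iff)

lemma quadratic_character_odd_power: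
  fixes x :: "'a::{finite,field}"
  assumes "odd CARD('a)" and "odd N"
  shows "quadratic_character (x ^ N) = quadratic_character x"
proof (cases "x = 0")
  case True
  then show ?thesis
    using assms odd_pos[OF assms(2)] by (simp add: power_0_left quadratic_character_0)
next
  case False
  have "quadratic_character (x ^ N) = quadratic_character x ^ N"
    unfolding quadratic_character_def by (simp flip: power_mult add: mult.commute)
  then show ?thesis
    using quadratic_character_cases[OF assms(1) False] assms(2) by auto
qed

lemma quadratic_character_inverse:
  fixes x :: "'a::{finite,field}"
  assumes "odd CARD('a)"
  shows "quadratic_character (inverse x) = quadratic_character x"
proof (cases "x = 0")
  case False
  have "quadratic_character (inverse x) = inverse (quadratic_character x)"
    unfolding quadratic_character_def by (simp add: power_inverse)
  then show ?thesis
    using quadratic_character_cases[OF assms False] by auto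
qed simp

text \<open>Euler's criterion: the nonzero squares lie among the at most \<open>(Q-1)/2\<close> roots of
  \<open>x^((Q-1)/2) = 1\<close>, and there are at least that many of them.\<close>

lemma quadratic_character_eq_1_iff:
  fixes x :: "'a::{finite,field}"
  assumes "odd CARD('a)"
  shows "quadratic_character x = 1 \<longleftrightarrow> x \<in> D0"
proof -
  define h where "h = (CARD('a) - 1) div 2"
  have "D0 \<subseteq> {y::'a. y ^ h = 1}"
  proof
    fix y :: 'a
    assume "y \<in> D0"
    then obtain w where "w \<noteq> 0" "y = w ^ 2"
      unfolding D0_def by auto
    then show "y \<in> {y. y ^ h = 1}"
      using quadratic_character_squared[OF assms \<open>w \<noteq> 0\<close>]
      unfolding quadratic_character_def h_def by (simp flip: power_mult add: mult.commute)
  qed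
  moreover have "card {y::'a. y ^ h = 1} \<le> card (D0 :: 'a set)"
  proof -
    have "h > 0"
      using odd_card_field_ge_3[OF assms] unfolding h_def by simp
    then have "card {y::'a. y ^ h = 1} \<le> h"
      by (rule card_power_eq_le)
    also have "h \<le> card (D0 :: 'a set)"
      using card_D0_lower_bound[where 'a = 'a] unfolding h_def by simp
    finally show ?thesis .
  qed
  ultimately have "D0 = {y::'a. y ^ h = 1}"
    by (intro card_seteq) auto
  then show ?thesis
    unfolding quadratic_character_def h_def by auto
qed

lemma power_card_plus_1_half:
  fixes u :: "'a::{finite,field}"
  assumes "odd CARD('a)"
  shows "u ^ ((CARD('a) + 1) div 2) = (if quadratic_character u = 1 then u else - u)"
proof -
  have "(CARD('a) + 1) div 2 = Suc ((CARD('a) - 1) div 2)"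
    using assms odd_card_field_ge_3[OF assms] by presburger
  then have "u ^ ((CARD('a) + 1) div 2) = u * quadratic_character u"
    unfolding quadratic_character_def by simp
  then show ?thesis
    using quadratic_character_cases[OF assms, of u] quadratic_character_0[OF assms]
    by (cases "u = 0") auto
qed

lemma power_CHAR_power_diff:
  fixes x y :: "'a::comm_ring_1"
  assumes "prime CHAR('a)" and "N = CHAR('a) ^ e"
  shows "(x - y) ^ N = x ^ N - y ^ N"
  using freshmans_dream'[OF assms, of "x - y" y] by (simp add: algebra_simps)

definition twist_inner :: "'a \<Rightarrow> 'a \<Rightarrow> 'a \<Rightarrow> nat \<Rightarrow> 'a \<Rightarrow> 'a::{finite,field}" where
  "twist_inner a b \<delta> N x = a * x ^ N - b * x + \<delta>"

definition twist_map :: "'a \<Rightarrow> 'a \<Rightarrow> 'a \<Rightarrow> nat \<Rightarrow> 'a \<Rightarrow> 'a::{finite,field}" where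
  "twist_map a b \<delta> N x = twist_inner a b \<delta> N x ^ ((CARD('a) + 1) div 2) + a * x ^ N + b * x"

context
  fixes a b \<delta> :: "'a::{finite,field}" and N e :: nat
  assumes odd_card: "odd CARD('a)" and N_eq: "N = CHAR('a) ^ e"
    and a_nonzero: "a \<noteq> 0" and b_nonzero: "b \<noteq> 0"
begin

abbreviation U where "U \<equiv> twist_inner a b \<delta> N"
abbreviation f where "f \<equiv> twist_map a b \<delta> N"

lemma odd_N: "odd N"
  using odd_CHAR_if_odd_card[OF odd_card] N_eq by simp

lemma frobenius_diff: "(x - y) ^ N = x ^ N - y ^ N" for x y :: 'a
  using power_CHAR_power_diff[OF prime_CHAR_finite_field N_eq] .

lemma frobenius_add: "(x + y) ^ N = x ^ N + y ^ N" for x y :: 'a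
  using freshmans_dream'[OF prime_CHAR_finite_field N_eq] .

lemma frobenius_eq_0_iff: "x ^ N = 0 \<longleftrightarrow> x = 0" for x :: 'a
  using odd_N by (auto simp: odd_pos)

lemma twist_map_eq:
  "f x =
     (if quadratic_character (U x) = 1 then 2 * a * x ^ N + \<delta> else 2 * b * x - \<delta>)"
  unfolding twist_map_def power_card_plus_1_half[OF odd_card] twist_inner_def
  by (simp add: algebra_simps)

text \<open>Where the two branches of \<open>f\<close> meet, \<open>\<eta>(U x) \<eta>(U y) = \<eta>(a b) \<eta>(y - x)^2\<close>.\<close>

lemma twist_inner_at_collision:
  assumes "2 * a * x ^ N + \<delta> = 2 * b * y - \<delta>"
  shows "U x = b * (y - x)" and "U y = a * (y - x) ^ N"
proof -
  have "2 * (b * y) = 2 * (a * x ^ N + \<delta>)"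
    using assms by (simp add: algebra_simps)
  then have "b * y = a * x ^ N + \<delta>"
    using two_neq_zero_if_odd_card[OF odd_card] by (metis mult_left_cancel)
  then show "U x = b * (y - x)" and "U y = a * (y - x) ^ N"
    unfolding twist_inner_def frobenius_diff by (simp_all add: algebra_simps)
qed

lemma inj_twist_map_if_square:
  assumes "a * b \<in> D0"
  shows "inj f"
proof -
  have collision_False: False
    if x: "quadratic_character (U x) = 1"
      and y: "quadratic_character (U y) \<noteq> 1"
      and eq: "2 * a * x ^ N + \<delta> = 2 * b * y - \<delta>" for x y
  proof -
    note inner = twist_inner_at_collision[OF eq]
    have "y - x \<noteq> 0"
      using x inner(1) quadratic_character_0[OF odd_card] by auto
    then have "quadratic_character (y - x) * quadratic_character (y - x) = 1"
      using quadratic_character_squared[OF odd_card] by (simp add: power2_eq_square)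
    moreover have "quadratic_character (a * b) = 1"
      using assms quadratic_character_eq_1_iff[OF odd_card] by blast
    ultimately have "quadratic_character (U y) * quadratic_character (U x) = 1"
      unfolding inner quadratic_character_mult quadratic_character_odd_power[OF odd_card odd_N]
      by (simp add: algebra_simps)
    with x y show False
      by simp
  qed
  show ?thesis
  proof (rule injI)
    fix x y
    assume eq: "f x = f y"
    show "x = y"
    proof (cases "quadratic_character (U x) = 1";
           cases "quadratic_character (U y) = 1")
      assume "quadratic_character (U x) = 1" "quadratic_character (U y) = 1"
      then have "(x - y) ^ N = 0"
        using eq a_nonzero two_neq_zero_if_odd_card[OF odd_card]
        by (simp add: twist_map_eq frobenius_diff)
      then show ?thesis
        by (simp add: frobenius_eq_0_iff)
    next
      assume "quadratic_character (U x) \<noteq> 1" "quadratic_character (U y) \<noteq> 1"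
      then show ?thesis
        using eq b_nonzero two_neq_zero_if_odd_card[OF odd_card] by (simp add: twist_map_eq)
    next
      assume "quadratic_character (U x) = 1" "quadratic_character (U y) \<noteq> 1"
      with eq have "2 * a * x ^ N + \<delta> = 2 * b * y - \<delta>"
        by (simp add: twist_map_eq)
      with collision_False \<open>_ = 1\<close> \<open>_ \<noteq> 1\<close> show ?thesis
        by blast
    next
      assume "quadratic_character (U x) \<noteq> 1" "quadratic_character (U y) = 1"
      with eq have "2 * a * y ^ N + \<delta> = 2 * b * x - \<delta>"
        by (simp add: twist_map_eq)
      with collision_False \<open>_ = 1\<close> \<open>_ \<noteq> 1\<close> show ?thesis
        by blast
    qed
  qed
qed

lemma inj_frobenius_minus_linear_if_nonsquare:
  assumes "a * b \<notin> D0"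
  shows "inj (\<lambda>x. a * x ^ N - b * x)"
proof (rule injI, rule ccontr)
  fix x y :: 'a
  assume "a * x ^ N - b * x = a * y ^ N - b * y" and "x \<noteq> y"
  define t where "t = x - y"
  have "t \<noteq> 0" and "a * t ^ N = b * t"
    using \<open>x \<noteq> y\<close> \<open>a * x ^ N - b * x = _\<close> unfolding t_def frobenius_diff
    by (simp_all add: algebra_simps)
  obtain j where j: "N = Suc (2 * j)"
    using odd_N by (metis oddE Suc_eq_plus1)
  have "a * t ^ (2 * j) = b"
    using \<open>a * t ^ N = b * t\<close> \<open>t \<noteq> 0\<close> unfolding j by (simp add: algebra_simps)
  moreover have "t ^ (2 * j) = t ^ j * t ^ j"
    by (simp add: mult_2 power_add)
  ultimately have "a * b = (a * t ^ j) ^ 2"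
    by (metis power2_eq_square mult.assoc mult.commute)
  moreover have "a * b \<noteq> 0"
    using a_nonzero b_nonzero by simp
  ultimately show False
    using assms unfolding D0_def by blast
qed

lemma not_inj_twist_map_if_nonsquare:
  assumes "a * b \<notin> D0"
  shows "\<not> inj f"
proof
  assume inj: "inj f"
  have "surj (\<lambda>x. a * x ^ N - b * x)"
    using inj_frobenius_minus_linear_if_nonsquare[OF assms] by (simp add: finite_UNIV_inj_surj)
  then obtain x where "1 - \<delta> = a * x ^ N - b * x"
    by (blast elim: surjE)
  then have x: "a * x ^ N - b * x = 1 - \<delta>"
    by simp
  define y where "y = x + inverse b"
  have "quadratic_character (a * b) = - 1"
    using quadratic_character_cases[OF odd_card, of "a * b"] assms a_nonzero b_nonzero
      quadratic_character_eq_1_iff[OF odd_card] by auto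
  moreover have "U y = a * inverse b ^ N"
    using x unfolding twist_inner_def y_def frobenius_add using b_nonzero
    by (simp add: algebra_simps)
  ultimately have "quadratic_character (U y) = - 1"
    by (simp add: quadratic_character_mult quadratic_character_odd_power[OF odd_card odd_N]
        quadratic_character_inverse[OF odd_card])
  moreover have "(- 1 :: 'a) \<noteq> 1"
    using two_neq_zero_if_odd_card[OF odd_card] by (metis one_add_one add_eq_0_iff)
  ultimately have "f y = 2 * b * y - \<delta>"
    by (simp add: twist_map_eq)
  also have "\<dots> = 2 * a * x ^ N + \<delta>"
  proof -
    have b_y: "b * y = b * x + 1"
      unfolding y_def using b_nonzero by (simp add: distrib_left)
    have ax: "a * x ^ N = b * x + 1 - \<delta>"
      using x by (simp add: algebra_simps)
    show ?thesis
      by (simp only: mult.assoc b_y ax) (simp add: algebra_simps)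
  qed
  also have "\<dots> = f x"
    using x by (simp add: twist_map_eq twist_inner_def quadratic_character_1)
  finally have "f y = f x" .
  moreover have "x \<noteq> y"
    unfolding y_def using b_nonzero by simp
  ultimately show False
    using injD[OF inj] by blast
qed

lemma bij_twist_map_iff: "bij f \<longleftrightarrow> a * b \<in> D0"
  using inj_twist_map_if_square not_inj_twist_map_if_nonsquare
  by (auto simp: bij_def finite_UNIV_inj_surj)

end

theorem mainTheorem11:
  fixes q n k :: nat and a b \<delta> :: "'a::{finite,field}"
  assumes "\<exists>p m. prime p \<and> m > 0 \<and> q = p ^ m"
    and "odd q"
    and "n > 0" and "k > 0"
    and "card (UNIV :: 'a set) = q ^ n"
    and "a * b \<noteq> 0"
  shows "permutation_poly
           (\<lambda>x. (a * x ^ (q ^ k) - b * x + \<delta>) ^ ((q ^ n + 1) div 2) + a * x ^ (q ^ k) + b * x)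
         \<longleftrightarrow> a * b \<in> D0"
proof -
  obtain p m where p: "prime p" and q: "q = p ^ m"
    using assms(1) by blast
  have "CHAR('a) dvd p ^ (m * n)"
    using CHAR_dvd_CARD[where 'a = 'a] assms(5) q by (simp add: power_mult)
  then have "CHAR('a) dvd p"
    by (rule prime_dvd_power[OF prime_CHAR_finite_field])
  then have "CHAR('a) = p"
    by (rule primes_dvd_imp_eq[OF prime_CHAR_finite_field p])
  then have "q ^ k = CHAR('a) ^ (m * k)"
    using q by (simp add: power_mult)
  moreover have "odd CARD('a)"
    using assms(2,5) by simp
  ultimately have "bij (twist_map a b \<delta> (q ^ k)) \<longleftrightarrow> a * b \<in> D0"
    using assms(6) by (intro bij_twist_map_iff) auto
  then show ?thesis
    unfolding permutation_poly_def twist_map_def[abs_def] twist_inner_def assms(5) .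
qed

end
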